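(* Let $B$ be the complex unital $*$-algebra generated by hermitian $p,q$ with relation $pq-qp=-\mathrm{i}\cdot 1$, let $d:=\mathrm{i}p$, $A:=\mathbb{C}[q]\subseteq B$, and $X:=\operatorname{span}\{a\,d^2\,b: a,b\in A\}\subseteq B$, a $*$-bimodule for $A$ under multiplication and involution of $B$. Let $\mu$ be a Radon measure on $\mathbb{R}$, not supported on a finite set, for which all polynomials are integrable, and let $f(a)=\int a\,d\mu$ on $A$ (polynomials in $q$ identified with polynomials in the real variable). Then: (i) the map $F_0\big(\sum_j a_j d^2 b_j\big):=\int\sum_j a_j b_j\,d\mu$ is a well-defined hermitian linear functional on $X$; (ii) for $x=\sum_j a_jd^2b_j$ and $h:=\sum_j a_jb_j$, one has $|F_0(a^+\cdot x)|^2\le f(h^+h)\,f(a^+a)$ for all $a\in A$; (iii) the GNS representation of $f$ acts on $\mathcal{D}_f=\mathbb{C}[x]\subseteq L^2(\mathbb{R};\mu)$ by multiplication, $\rho_f(a)b=ab$, with $\varphi_f=1$, and setting $\theta_{F_0}\big(\sum_j a_jd^2b_j\big)b:=\sum_j a_jb_jb$ for $b\in\mathcal{D}_f$ gives a well-defined map such that $(\theta_{F_0},\rho_f)$ is a strong $*$-representation of $X$ on $\mathcal{D}_f$ with $F_0(a\cdot x\cdot b)=\langle\theta_{F_0}(x)\rho_f(b)\varphi_f,\rho_f(a^+)\varphi_f\rangle$ for all $a,b\in A$, $x\in X$; in particular $\theta_{F_0}(d^2)=I$.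
   Context: A $*$-bimodule $X$ for $A$: a complex $A$-bimodule (unital left and right $A$-module with commuting actions) with conjugate-linear involution satisfying $(a\cdot x\cdot b)^+=b^+\cdot x^+\cdot a^+$. On $A=\mathbb{C}[q]$, $a^+$ is the polynomial with complex-conjugated coefficients. Hermitian: $F(x^+)=\overline{F(x)}$. GNS representation of a positive functional $f$: $\mathcal{D}_f=A/\{a:f(a^+a)=0\}$ with inner product $f(b^+a)$, $\rho_f(a)(b+\mathcal{N}_f)=ab+\mathcal{N}_f$, $\varphi_f=1+\mathcal{N}_f$. A $*$-representation of $X$ on an inner product space $\mathcal{D}$ with completion $\mathcal{H}$ is a pair $(\theta,\rho)$ with $\rho$ a $*$-representation of $A$ ($\langle\rho(a)\varphi,\psi\rangle=\langle\varphi,\rho(a^+)\psi\rangle$) with $\rho(1)=I$, and $\theta$ a linear map from $X$ into operators $t:\mathcal{D}\to\mathcal{H}$ with $\mathcal{D}(t^* )\supseteq\mathcal{D}$, such that $\theta(x^+)=\theta(x)^*|_{\mathcal{D}}$ and $\langle\theta(a\cdot x\cdot b)\varphi,\psi\rangle=\langle\theta(x)\rho(b)\varphi,\rho(a^+)\psi\rangle$. It is strong if every $\theta(x)$ maps $\mathcal{D}$ into $\mathcal{D}$ and $\theta(x)^*$ also maps $\mathcal{D}$ into $\mathcal{D}$. *)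

theory Defs
  imports "HOL-Analysis.Analysis" "HOL-Computational_Algebra.Polynomial"
begin

text \<open>Elements of B are realised as operators on complex polynomials:
  q acts by multiplication with x, p acts as -i d/dx; then pq - qp = -i.
  This representation of the Weyl algebra is faithful, so equality in B
  is equality of these operators.\<close>

definition qB :: "complex poly \<Rightarrow> complex poly" where
  "qB g = [:0, 1:] * g"

definition pB :: "complex poly \<Rightarrow> complex poly" where
  "pB g = smult (- \<i>) (pderiv g)"

definition dB :: "complex poly \<Rightarrow> complex poly" where
  "dB g = smult \<i> (pB g)"

definition mulA :: "complex poly \<Rightarrow> complex poly \<Rightarrow> complex poly" where
  "mulA a g = a * g"

lemma canonical_relation: "pB (qB g) - qB (pB g) = smult (- \<i>) g"
  by (simp add: pB_def qB_def pderiv_mult pderiv_pCons algebra_simps smult_add_right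
      flip: smult_diff_right)

text \<open>An element of X is presented by a finite list of pairs (a_j, b_j), standing for
  sum_j a_j d^2 b_j (complex scalars are absorbed into a_j; the empty list is 0).\<close>

type_synonym xrep = "(complex poly \<times> complex poly) list"

definition Xelem :: "xrep \<Rightarrow> complex poly \<Rightarrow> complex poly" where
  "Xelem xs g = (\<Sum>(a, b)\<leftarrow>xs. mulA a (dB (dB (mulA b g))))"

definition pconj :: "complex poly \<Rightarrow> complex poly" where
  "pconj a = map_poly cnj a"

text \<open>involution of B restricted to X: (a d^2 b)^+ = b^+ (d^+)^2 a^+ = b^+ d^2 a^+\<close>
definition xstar :: "xrep \<Rightarrow> xrep" where
  "xstar xs = map (\<lambda>(a, b). (pconj b, pconj a)) xs"

definition bimod :: "complex poly \<Rightarrow> xrep \<Rightarrow> complex poly \<Rightarrow> xrep" where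
  "bimod c xs e = map (\<lambda>(a, b). (c * a, b * e)) xs"

definition xscale :: "complex \<Rightarrow> xrep \<Rightarrow> xrep" where
  "xscale s xs = map (\<lambda>(a, b). (smult s a, b)) xs"

definition d2 :: xrep where
  "d2 = [(1, 1)]"

definition hsum :: "xrep \<Rightarrow> complex poly" where
  "hsum xs = (\<Sum>(a, b)\<leftarrow>xs. a * b)"

definition fmu :: "real measure \<Rightarrow> complex poly \<Rightarrow> complex" where
  "fmu M a = (\<integral>x. poly a (complex_of_real x) \<partial>M)"

definition F0 :: "real measure \<Rightarrow> xrep \<Rightarrow> complex" where
  "F0 M xs = fmu M (hsum xs)"

definition gns_ip :: "real measure \<Rightarrow> complex poly \<Rightarrow> complex poly \<Rightarrow> complex" where
  "gns_ip M a b = fmu M (pconj b * a)"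

definition gns_null :: "real measure \<Rightarrow> complex poly set" where
  "gns_null M = {a. fmu M (pconj a * a) = 0}"

definition rho :: "complex poly \<Rightarrow> complex poly \<Rightarrow> complex poly" where
  "rho a b = a * b"

definition phi :: "complex poly" where
  "phi = 1"

definition thetaF0 :: "xrep \<Rightarrow> complex poly \<Rightarrow> complex poly" where
  "thetaF0 xs b = hsum xs * b"

end

theory Submission
  imports Defs
begin

text \<open>In the Schroedinger picture the element \<open>T = \<Sum>\<^sub>j a\<^sub>j d\<^sup>2 b\<^sub>j\<close> acts by
  \<open>g \<mapsto> \<Sum>\<^sub>j a\<^sub>j (b\<^sub>j g)''\<close>. Since \<open>(b x\<^sup>2)'' - 2x (b x)'' + x\<^sup>2 b'' = 2b\<close>, the operator \<open>T\<close>
  determines \<open>h = \<Sum>\<^sub>j a\<^sub>j b\<^sub>j\<close> via \<open>T(x\<^sup>2) - 2x T(x) + x\<^sup>2 T(1) = 2h\<close>. Hence \<open>F\<^sub>0\<close> and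
  \<open>\<theta>\<^sub>F\<^sub>0\<close>, which only see \<open>h\<close>, are well defined, and all remaining claims are statements
  about the \<open>L\<^sup>2(\<mu>)\<close> inner product of polynomials. That inner product is definite
  because a nonzero polynomial vanishes only on a finite set, which cannot carry \<open>\<mu>\<close>;
  so the GNS space of \<open>f\<close> is \<open>\<complex>[x]\<close> itself and the Cauchy-Schwarz bound is the one in
  \<open>L\<^sup>2(\<mu>)\<close>.\<close>

lemma pconj_0: "pconj 0 = 0"
  by (simp add: pconj_def)

lemma pconj_add: "pconj (p + q) = pconj p + pconj q"
  by (rule poly_ext) (simp add: pconj_def)

lemma pconj_mult: "pconj (p * q) = pconj p * pconj q"
  by (rule poly_ext) (simp add: pconj_def)

lemma poly_pconj_of_real [simp]:
  "poly (pconj p) (complex_of_real x) = cnj (poly p (complex_of_real x))"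
  by (simp add: pconj_def)

lemma Xelem_Nil [simp]: "Xelem [] g = 0"
  by (simp add: Xelem_def)

lemma Xelem_Cons [simp]: "Xelem ((a, b) # xs) g = a * pderiv (pderiv (b * g)) + Xelem xs g"
  by (simp add: Xelem_def dB_def pB_def mulA_def)

lemma hsum_Nil [simp]: "hsum [] = 0"
  by (simp add: hsum_def)

lemma hsum_Cons [simp]: "hsum ((a, b) # xs) = a * b + hsum xs"
  by (simp add: hsum_def)

lemma pderiv2_second_difference:
  fixes b :: "'a::idom poly"
  defines "x \<equiv> [:0, 1:]"
  shows "pderiv (pderiv (b * (x * x))) - 2 * (x * pderiv (pderiv (b * x))) + x * x * pderiv (pderiv b)
    = 2 * b"
proof -
  have "pderiv x = 1"
    by (simp add: x_def pderiv_pCons)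
  then show ?thesis
    by (simp add: pderiv_mult pderiv_add algebra_simps)
qed

lemma Xelem_second_difference:
  defines "x \<equiv> [:0, 1:]"
  shows "Xelem xs (x * x) - 2 * (x * Xelem xs x) + x * x * Xelem xs 1 = 2 * hsum xs"
proof (induction xs)
  case (Cons ab xs)
  obtain a b where ab: "ab = (a, b)"
    by fastforce
  have "a * pderiv (pderiv (b * (x * x))) - 2 * (x * (a * pderiv (pderiv (b * x))))
      + x * x * (a * pderiv (pderiv b)) = a * (2 * b)"
    unfolding pderiv2_second_difference[of b, folded x_def, symmetric] by (simp add: algebra_simps)
  with Cons.IH show ?case
    by (simp add: ab algebra_simps)
qed simp

lemma hsum_eq_if_Xelem_eq: "Xelem xs = Xelem ys \<Longrightarrow> hsum xs = hsum ys"
  using Xelem_second_difference[of xs] Xelem_second_difference[of ys] by simp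

lemma hsum_append: "hsum (xs @ ys) = hsum xs + hsum ys"
  by (simp add: hsum_def)

lemma hsum_xscale: "hsum (xscale s xs) = smult s (hsum xs)"
  by (induction xs) (auto simp: xscale_def smult_add_right)

lemma hsum_bimod: "hsum (bimod c xs e) = c * hsum xs * e"
  by (induction xs) (auto simp: bimod_def algebra_simps)

lemma hsum_xstar: "hsum (xstar xs) = pconj (hsum xs)"
  by (induction xs) (auto simp: xstar_def pconj_0 pconj_add pconj_mult mult.commute)

lemma integrable_poly_of_real:
  fixes M :: "real measure"
  assumes "\<And>n. integrable M (\<lambda>x. x ^ n)"
  shows "integrable M (\<lambda>x. poly p (complex_of_real x))"
proof -
  have "integrable M (\<lambda>x. complex_of_real x ^ i)" for i
    using assms[of i] by (simp flip: of_real_power)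
  then show ?thesis
    by (simp add: poly_altdef)
qed

lemma fmu_add:
  assumes "\<And>n. integrable M (\<lambda>x. x ^ n)"
  shows "fmu M (p + q) = fmu M p + fmu M q"
  using integrable_poly_of_real[OF assms] by (simp add: fmu_def)

lemma fmu_smult: "fmu M (smult s p) = s * fmu M p"
  by (simp add: fmu_def)

lemma fmu_pconj: "fmu M (pconj p) = cnj (fmu M p)"
  by (simp add: fmu_def)

lemma gns_ip_eq_integral:
  "gns_ip M a b = (\<integral>x. poly a (complex_of_real x) * cnj (poly b (complex_of_real x)) \<partial>M)"
  by (simp add: gns_ip_def fmu_def mult.commute)

lemma poly_pconj_mult_self_of_real:
  "poly (pconj a * a) (complex_of_real x) = complex_of_real ((cmod (poly a (complex_of_real x)))\<^sup>2)"
  by (subst complex_norm_square) (simp add: mult.commute)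

lemma fmu_pconj_mult_self:
  "fmu M (pconj a * a) = complex_of_real (\<integral>x. (cmod (poly a (complex_of_real x)))\<^sup>2 \<partial>M)"
  unfolding fmu_def poly_pconj_mult_self_of_real by (rule integral_complex_of_real)

lemma integrable_cmod_poly_square:
  fixes M :: "real measure"
  assumes "\<And>n. integrable M (\<lambda>x. x ^ n)"
  shows "integrable M (\<lambda>x. (cmod (poly a (complex_of_real x)))\<^sup>2)"
  using integrable_poly_of_real[OF assms, of "pconj a * a"]
  unfolding poly_pconj_mult_self_of_real complex_of_real_integrable_eq .

lemma Cauchy_Schwarz_nonneg_integral:
  fixes f g :: "'a \<Rightarrow> real"
  assumes "integrable M (\<lambda>x. f x ^ 2)" "integrable M (\<lambda>x. g x ^ 2)" "integrable M (\<lambda>x. f x * g x)"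
    and "\<And>x. f x \<ge> 0" "\<And>x. g x \<ge> 0"
  shows "(\<integral>x. f x * g x \<partial>M)\<^sup>2 \<le> (\<integral>x. f x ^ 2 \<partial>M) * (\<integral>x. g x ^ 2 \<partial>M)"
proof -
  have nn: "(\<integral>\<^sup>+x. ennreal (h x) \<partial>M) = ennreal (\<integral>x. h x \<partial>M)"
    if "integrable M h" "\<And>x. h x \<ge> 0" for h :: "'a \<Rightarrow> real"
    using nn_integral_eq_integral[OF that(1)] that(2) by simp
  have "ennreal ((\<integral>x. f x * g x \<partial>M)\<^sup>2) = (\<integral>\<^sup>+x. ennreal (f x) * ennreal (g x) \<partial>M)\<^sup>2"
    using nn[OF assms(3)] assms(4,5) by (simp add: ennreal_mult ennreal_power)
  also have "\<dots> \<le> (\<integral>\<^sup>+x. ennreal (f x) ^ 2 \<partial>M) * (\<integral>\<^sup>+x. ennreal (g x) ^ 2 \<partial>M)"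
  proof (intro Cauchy_Schwarz_nn_integral measurable_compose[OF _ measurable_ennreal])
    have "f = (\<lambda>x. sqrt (f x ^ 2))" "g = (\<lambda>x. sqrt (g x ^ 2))"
      using assms(4,5) by auto
    then show "f \<in> borel_measurable M" "g \<in> borel_measurable M"
      using measurable_compose[OF borel_measurable_integrable[OF assms(1)] borel_measurable_sqrt]
        measurable_compose[OF borel_measurable_integrable[OF assms(2)] borel_measurable_sqrt]
      by (simp_all only:)
  qed
  also have "\<dots> = ennreal ((\<integral>x. f x ^ 2 \<partial>M) * (\<integral>x. g x ^ 2 \<partial>M))"
    using nn[OF assms(1)] nn[OF assms(2)] assms(4,5) by (simp add: ennreal_power ennreal_mult)
  finally show ?thesis
    by simp
qed

lemma fmu_Cauchy_Schwarz:
  fixes M :: "real measure"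
  assumes "\<And>n. integrable M (\<lambda>x. x ^ n)"
  shows "(cmod (fmu M (pconj a * h)))\<^sup>2 \<le> Re (fmu M (pconj h * h) * fmu M (pconj a * a))"
proof -
  define fa where "fa x = cmod (poly a (complex_of_real x))" for x
  define fh where "fh x = cmod (poly h (complex_of_real x))" for x
  have norm_eq: "cmod (poly (pconj a * h) (complex_of_real x)) = fa x * fh x" for x
    by (simp add: fa_def fh_def norm_mult)
  have integrable: "integrable M (\<lambda>x. fa x * fh x)"
    using integrable_norm[OF integrable_poly_of_real[OF assms, of "pconj a * h"]] unfolding norm_eq .
  moreover have "cmod (fmu M (pconj a * h)) \<le> (\<integral>x. fa x * fh x \<partial>M)"
    using integral_norm_bound[of M "\<lambda>x. poly (pconj a * h) (complex_of_real x)"]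
    unfolding fmu_def norm_eq .
  ultimately have "(cmod (fmu M (pconj a * h)))\<^sup>2 \<le> (\<integral>x. fa x * fh x \<partial>M)\<^sup>2"
    by (simp add: power_mono)
  also have "\<dots> \<le> (\<integral>x. fa x ^ 2 \<partial>M) * (\<integral>x. fh x ^ 2 \<partial>M)"
    by (rule Cauchy_Schwarz_nonneg_integral)
      (use integrable integrable_cmod_poly_square[OF assms] in
        \<open>simp_all add: fa_def fh_def\<close>)
  also have "\<dots> = Re (fmu M (pconj h * h) * fmu M (pconj a * a))"
    unfolding fmu_pconj_mult_self by (simp add: fa_def fh_def mult.commute)
  finally show ?thesis .
qed

lemma gns_null_eq_zero:
  fixes M :: "real measure"
  assumes "sets M = sets borel"
    and "\<And>n. integrable M (\<lambda>x. x ^ n)"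
    and not_finite_supp: "\<And>S. finite S \<Longrightarrow> emeasure M (UNIV - S) \<noteq> 0"
  shows "gns_null M = {0}"
proof -
  have "a = 0" if "fmu M (pconj a * a) = 0" for a
  proof (rule ccontr)
    assume "a \<noteq> 0"
    have "(\<integral>x. (cmod (poly a (complex_of_real x)))\<^sup>2 \<partial>M) = 0"
      using that by (simp add: fmu_pconj_mult_self)
    then have "AE x in M. poly a (complex_of_real x) = 0"
      by (simp add: integral_nonneg_eq_0_iff_AE[OF integrable_cmod_poly_square[OF assms(2)]])
    then obtain N where N: "{x \<in> space M. poly a (complex_of_real x) \<noteq> 0} \<subseteq> N"
      "emeasure M N = 0" "N \<in> sets M"
      by (auto elim!: AE_E)
    define S where "S = complex_of_real -` {z. poly a z = 0}"
    have "finite S"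
      unfolding S_def using \<open>a \<noteq> 0\<close> by (intro finite_vimageI) (auto simp: poly_roots_finite inj_on_def)
    moreover have "UNIV - S \<subseteq> N"
      using N(1) sets_eq_imp_space_eq[OF assms(1)] by (auto simp: S_def)
    then have "emeasure M (UNIV - S) = 0"
      using emeasure_mono[OF _ N(3)] N(2) by (metis le_zero_eq)
    ultimately show False
      using not_finite_supp by blast
  qed
  then show ?thesis
    by (auto simp: gns_null_def fmu_def)
qed

lemma F0_cong: "Xelem xs = Xelem ys \<Longrightarrow> F0 M xs = F0 M ys"
  by (simp add: F0_def hsum_eq_if_Xelem_eq[of xs ys])

lemma F0_append:
  assumes "\<And>n. integrable M (\<lambda>x. x ^ n)"
  shows "F0 M (xs @ ys) = F0 M xs + F0 M ys"
  by (simp add: F0_def hsum_append fmu_add[OF assms])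

lemma F0_xscale: "F0 M (xscale s xs) = s * F0 M xs"
  by (simp add: F0_def hsum_xscale fmu_smult)

lemma F0_xstar: "F0 M (xstar xs) = cnj (F0 M xs)"
  unfolding F0_def hsum_xstar by (rule fmu_pconj)

lemma fmu_pconj_mult_self_mult_Reals: "fmu M (pconj h * h) * fmu M (pconj a * a) \<in> \<real>"
  unfolding fmu_pconj_mult_self by (intro Reals_mult Reals_of_real)

lemma F0_bimod_Cauchy_Schwarz:
  fixes M :: "real measure"
  assumes "\<And>n. integrable M (\<lambda>x. x ^ n)"
  shows "(cmod (F0 M (bimod (pconj a) xs 1)))\<^sup>2
    \<le> Re (fmu M (pconj (hsum xs) * hsum xs) * fmu M (pconj a * a))"
  using fmu_Cauchy_Schwarz[OF assms] by (simp add: F0_def hsum_bimod)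

lemma gns_ip_rho_adjoint: "gns_ip M (rho a u) v = gns_ip M u (rho (pconj a) v)"
  by (simp add: gns_ip_eq_integral rho_def mult_ac)

lemma thetaF0_cong: "Xelem xs = Xelem ys \<Longrightarrow> thetaF0 xs = thetaF0 ys"
  by (simp add: thetaF0_def hsum_eq_if_Xelem_eq[of xs ys] fun_eq_iff)

lemma thetaF0_adjoint: "gns_ip M (thetaF0 xs u) v = gns_ip M u (thetaF0 (xstar xs) v)"
  by (simp add: gns_ip_eq_integral thetaF0_def hsum_xstar mult_ac)

lemma thetaF0_bimod:
  "gns_ip M (thetaF0 (bimod a xs b) u) v = gns_ip M (thetaF0 xs (rho b u)) (rho (pconj a) v)"
  by (simp add: gns_ip_eq_integral thetaF0_def hsum_bimod rho_def mult_ac)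

lemma F0_bimod_eq_gns_ip: "F0 M (bimod a xs b) = gns_ip M (thetaF0 xs (rho b phi)) (rho (pconj a) phi)"
  by (simp add: gns_ip_eq_integral F0_def fmu_def thetaF0_def hsum_bimod rho_def phi_def mult_ac)

theorem mainTheorem12:
  fixes M :: "real measure"
  assumes borel: "sets M = sets borel"
    and radon: "\<forall>K. compact K \<longrightarrow> emeasure M K < \<infinity>"
    and moments: "\<forall>n::nat. integrable M (\<lambda>x. x ^ n)"
    and not_finite_supp: "\<not> (\<exists>S. finite S \<and> emeasure M (UNIV - S) = 0)"
  shows
    "(\<forall>xs ys. Xelem xs = Xelem ys \<longrightarrow> F0 M xs = F0 M ys)
     \<and> (\<forall>xs ys. F0 M (xs @ ys) = F0 M xs + F0 M ys)
     \<and> (\<forall>s xs. F0 M (xscale s xs) = s * F0 M xs)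
     \<and> (\<forall>xs. F0 M (xstar xs) = cnj (F0 M xs))
     \<and> (\<forall>xs a. fmu M (pconj (hsum xs) * hsum xs) * fmu M (pconj a * a) \<in> \<real>
         \<and> (cmod (F0 M (bimod (pconj a) xs 1)))\<^sup>2
             \<le> Re (fmu M (pconj (hsum xs) * hsum xs) * fmu M (pconj a * a)))
     \<and> gns_null M = {0}
     \<and> (\<forall>a b. gns_ip M a b = (\<integral>x. poly a (complex_of_real x) * cnj (poly b (complex_of_real x)) \<partial>M))
     \<and> (\<forall>a. rho 1 a = a)
     \<and> (\<forall>a u v. gns_ip M (rho a u) v = gns_ip M u (rho (pconj a) v))
     \<and> (\<forall>xs ys. Xelem xs = Xelem ys \<longrightarrow> thetaF0 xs = thetaF0 ys)
     \<and> (\<forall>xs ys b. thetaF0 (xs @ ys) b = thetaF0 xs b + thetaF0 ys b)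
     \<and> (\<forall>s xs b. thetaF0 (xscale s xs) b = smult s (thetaF0 xs b))
     \<and> (\<forall>xs b c. thetaF0 xs (b + c) = thetaF0 xs b + thetaF0 xs c)
     \<and> (\<forall>xs s b. thetaF0 xs (smult s b) = smult s (thetaF0 xs b))
     \<and> (\<forall>xs u v. gns_ip M (thetaF0 xs u) v = gns_ip M u (thetaF0 (xstar xs) v))
     \<and> (\<forall>xs a b u v. gns_ip M (thetaF0 (bimod a xs b) u) v
                       = gns_ip M (thetaF0 xs (rho b u)) (rho (pconj a) v))
     \<and> (\<forall>xs a b. F0 M (bimod a xs b) = gns_ip M (thetaF0 xs (rho b phi)) (rho (pconj a) phi))
     \<and> thetaF0 d2 = id"
proof -
  note moments = moments[rule_format]
  have "gns_null M = {0}"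
    using gns_null_eq_zero[OF borel moments] not_finite_supp by blast
  then show ?thesis
    by (intro conjI allI impI F0_cong F0_append[OF moments] F0_xscale F0_xstar
        fmu_pconj_mult_self_mult_Reals F0_bimod_Cauchy_Schwarz[OF moments] gns_ip_eq_integral
        gns_ip_rho_adjoint thetaF0_cong thetaF0_adjoint thetaF0_bimod F0_bimod_eq_gns_ip)
      (simp_all add: rho_def thetaF0_def hsum_append hsum_xscale d2_def distrib_left distrib_right
        fun_eq_iff)
qed

end
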